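(* Let $\mathcal{D}$ be a set, $\Sigma$ a finite set and $R\subseteq\mathcal{D}^\Sigma$. Suppose one of the following holds: (i) $R\neq\mathcal{D}^\Sigma$, but $\pi_\Lambda R=\mathcal{D}^\Lambda$ for every non-empty proper subset $\emptyset\subset\Lambda\subset\Sigma$; (ii) $\neg R$ is non-empty, but $\pi_{\{i\}}(\neg R)\neq\mathcal{D}$ for every $i\in\Sigma$. Then $R$ is non-degenerate.
   Context: An attributed relation is a subset $R\subseteq\mathcal{D}^\Sigma$ with $\Sigma$ a finite set of attributes; for $\Lambda\subseteq\Sigma$, $\pi_\Lambda R=\{a|_\Lambda: a\in R\}$, and $\neg R=\mathcal{D}^\Sigma\setminus R$. $R$ is a Cartesian product over a partition $\Sigma=\Lambda_1\cup\dots\cup\Lambda_m$ if there exist $R^{\Lambda_i}\subseteq\mathcal{D}^{\Lambda_i}$ with $R=\{a\in\mathcal{D}^\Sigma: a|_{\Lambda_i}\in R^{\Lambda_i}\ \forall i\}$. $R$ is degenerate if it is a Cartesian product over some partition with $m>1$ and all $\Lambda_i\neq\emptyset$; otherwise non-degenerate. *)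

theory Defs
  imports "HOL-Library.FuncSet"
begin

definition tuples :: "'d set \<Rightarrow> 'a set \<Rightarrow> ('a \<Rightarrow> 'd) set" where
  "tuples D S = PiE S (\<lambda>_. D)"

definition proj :: "'a set \<Rightarrow> ('a \<Rightarrow> 'd) set \<Rightarrow> ('a \<Rightarrow> 'd) set" where
  "proj L R = (\<lambda>a. restrict a L) ` R"

definition rel_neg :: "'d set \<Rightarrow> 'a set \<Rightarrow> ('a \<Rightarrow> 'd) set \<Rightarrow> ('a \<Rightarrow> 'd) set" where
  "rel_neg D S R = tuples D S - R"

definition is_partition :: "'a set set \<Rightarrow> 'a set \<Rightarrow> bool" where
  "is_partition P S \<longleftrightarrow> \<Union>P = S \<and> (\<forall>L1\<in>P. \<forall>L2\<in>P. L1 \<noteq> L2 \<longrightarrow> L1 \<inter> L2 = {})"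

definition cartesian_product_over ::
  "'d set \<Rightarrow> 'a set \<Rightarrow> ('a \<Rightarrow> 'd) set \<Rightarrow> 'a set set \<Rightarrow> bool" where
  "cartesian_product_over D S R P \<longleftrightarrow>
     (\<exists>RL :: 'a set \<Rightarrow> ('a \<Rightarrow> 'd) set.
        (\<forall>L\<in>P. RL L \<subseteq> tuples D L) \<and>
        R = {a \<in> tuples D S. \<forall>L\<in>P. restrict a L \<in> RL L})"

definition degenerate :: "'d set \<Rightarrow> 'a set \<Rightarrow> ('a \<Rightarrow> 'd) set \<Rightarrow> bool" where
  "degenerate D S R \<longleftrightarrow>
     (\<exists>P. is_partition P S \<and> finite P \<and> card P > 1 \<and> (\<forall>L\<in>P. L \<noteq> {}) \<and>
          cartesian_product_over D S R P)"

end

theory Submission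
  imports Defs
begin

text \<open>If \<open>R\<close> is a Cartesian product over a partition into at least two non-empty blocks, then
  every block is a non-empty proper subset of the attributes, and the factors may be taken to be
  the block projections of \<open>R\<close>. Under (i) these projections are all full, so \<open>R\<close> is everything.
  Under (ii) pick \<open>b \<notin> R\<close>: some block \<open>L\<close> alone witnesses \<open>b \<notin> R\<close>, so changing \<open>b\<close> at any
  attribute \<open>i\<close> outside \<open>L\<close> stays in \<open>\<not>R\<close>, and the projection of \<open>\<not>R\<close> onto \<open>{i}\<close> is full.\<close>

lemma restrict_in_tuples:
  assumes "a \<in> tuples D S" "L \<subseteq> S"
  shows "restrict a L \<in> tuples D L"
  using assms unfolding tuples_def by auto

lemma proj_subset_tuples:
  assumes "X \<subseteq> tuples D S" "L \<subseteq> S"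
  shows "proj L X \<subseteq> tuples D L"
  using assms restrict_in_tuples unfolding proj_def by blast

lemma proj_singleton_eq_tuples:
  assumes "X \<subseteq> tuples D S" "i \<in> S" "\<And>d. d \<in> D \<Longrightarrow> b(i := d) \<in> X"
  shows "proj {i} X = tuples D {i}"
proof
  show "proj {i} X \<subseteq> tuples D {i}"
    using assms(1,2) by (simp add: proj_subset_tuples)
next
  show "tuples D {i} \<subseteq> proj {i} X"
  proof
    fix f assume f: "f \<in> tuples D {i}"
    then have "b(i := f i) \<in> X"
      using assms(3) unfolding tuples_def by auto
    moreover have "restrict (b(i := f i)) {i} = f"
      using f unfolding tuples_def by (auto simp: restrict_def PiE_def extensional_def)
    ultimately show "f \<in> proj {i} X"
      unfolding proj_def by (metis image_eqI)
  qed
qed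

lemma partition_block_psubset:
  assumes "is_partition P S" "card P > 1" "\<forall>L\<in>P. L \<noteq> {}" "L \<in> P"
  shows "L \<subset> S"
proof -
  have "P \<noteq> {L}"
    using assms(2) by auto
  then obtain L' where L': "L' \<in> P" "L' \<noteq> L"
    using assms(4) by blast
  then obtain x where "x \<in> L'"
    using assms(3) by blast
  with L' assms(1,4) have "x \<in> S - L"
    unfolding is_partition_def by blast
  then show ?thesis
    using assms(1,4) unfolding is_partition_def by blast
qed

lemma cartesian_product_over_proj:
  assumes "cartesian_product_over D S R P"
  shows "a \<in> R \<longleftrightarrow> a \<in> tuples D S \<and> (\<forall>L\<in>P. restrict a L \<in> proj L R)"
proof -
  obtain RL where R: "R = {a \<in> tuples D S. \<forall>L\<in>P. restrict a L \<in> RL L}"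
    using assms unfolding cartesian_product_over_def by blast
  have "proj L R \<subseteq> RL L" if "L \<in> P" for L
    using that unfolding R proj_def by auto
  then have "{a \<in> tuples D S. \<forall>L\<in>P. restrict a L \<in> proj L R} \<subseteq> R"
    unfolding R by blast
  moreover have "R \<subseteq> {a \<in> tuples D S. \<forall>L\<in>P. restrict a L \<in> proj L R}"
    unfolding proj_def using R by blast
  ultimately show ?thesis by blast
qed

lemma degenerate_eq_tuples_if_proper_projs_full:
  assumes "degenerate D S R"
    and full: "\<forall>L. L \<noteq> {} \<and> L \<subset> S \<longrightarrow> proj L R = tuples D L"
  shows "R = tuples D S"
proof -
  obtain P where P: "is_partition P S" "card P > 1" "\<forall>L\<in>P. L \<noteq> {}"
    and cp: "cartesian_product_over D S R P"
    using assms(1) unfolding degenerate_def by blast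
  have "restrict a L \<in> proj L R" if "a \<in> tuples D S" "L \<in> P" for a L
  proof -
    have "L \<subset> S"
      using partition_block_psubset[OF P \<open>L \<in> P\<close>] .
    then have "proj L R = tuples D L"
      using full P(3) \<open>L \<in> P\<close> by simp
    with \<open>L \<subset> S\<close> show ?thesis
      using restrict_in_tuples[OF \<open>a \<in> tuples D S\<close>] by blast
  qed
  then have "a \<in> R \<longleftrightarrow> a \<in> tuples D S" for a
    using cartesian_product_over_proj[OF cp, of a] by blast
  then show ?thesis
    by blast
qed

lemma degenerate_rel_neg_proj_singleton_full:
  assumes "degenerate D S R" "rel_neg D S R \<noteq> {}"
  shows "\<exists>i\<in>S. proj {i} (rel_neg D S R) = tuples D {i}"
proof -
  obtain P where P: "is_partition P S" "card P > 1" "\<forall>L\<in>P. L \<noteq> {}"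
    and cp: "cartesian_product_over D S R P"
    using assms(1) unfolding degenerate_def by blast
  obtain b where b: "b \<in> tuples D S" "b \<notin> R"
    using assms(2) unfolding rel_neg_def by blast
  then obtain L where L: "L \<in> P" "restrict b L \<notin> proj L R"
    using cartesian_product_over_proj[OF cp, of b] by blast
  obtain i where i: "i \<in> S" "i \<notin> L"
    using partition_block_psubset[OF P L(1)] by blast
  have b_upd: "b(i := d) \<in> rel_neg D S R" if "d \<in> D" for d
  proof -
    have "restrict (b(i := d)) L = restrict b L"
      using i(2) by (auto simp: restrict_def)
    then have "b(i := d) \<notin> R"
      using L cartesian_product_over_proj[OF cp, of "b(i := d)"] by auto
    moreover have "b(i := d) \<in> tuples D S"
      using b(1) i(1) that unfolding tuples_def by (auto simp: PiE_def Pi_def extensional_def)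
    ultimately show ?thesis
      unfolding rel_neg_def by blast
  qed
  have "rel_neg D S R \<subseteq> tuples D S"
    unfolding rel_neg_def by blast
  then have "proj {i} (rel_neg D S R) = tuples D {i}"
    using i(1) b_upd by (rule proj_singleton_eq_tuples)
  with i(1) show ?thesis ..
qed

theorem theorem4:
  fixes D :: "'d set" and S :: "'a set" and R :: "('a \<Rightarrow> 'd) set"
  assumes "finite S"
    and "R \<subseteq> tuples D S"
    and "(R \<noteq> tuples D S \<and>
           (\<forall>L. L \<noteq> {} \<and> L \<subset> S \<longrightarrow> proj L R = tuples D L))
         \<or> (rel_neg D S R \<noteq> {} \<and>
           (\<forall>i\<in>S. proj {i} (rel_neg D S R) \<noteq> tuples D {i}))"
  shows "\<not> degenerate D S R"
proof
  assume "degenerate D S R"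
  with assms(3) show False
    using degenerate_eq_tuples_if_proper_projs_full[of D S R]
      degenerate_rel_neg_proj_singleton_full[of D S R] by blast
qed

end
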